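(* Let $\lambda$ be a partition of $n$ with conjugate partition $\lambda'$, let $k\ge0$, and let $X\subseteq[n+k]$. Then $$\#\{S\in\mathrm{SYT}^{+k}(\lambda):\mathrm{Des}^{+k}(S)=X\}=\#\{S\in\mathrm{SYT}^{+k}(\lambda'):\mathrm{Des}^{+k}(S)=X\}.$$
   Context: $\mathrm{SYT}^{+k}(\lambda)$: fillings $S$ of the cells of the Ferrers diagram of $\lambda$ (rows numbered from the top) by nonempty sets of positive integers forming a set partition of $[n+k]$, with $\max S(u)<\min S(v)$ whenever $u\ne v$ and $u$ is weakly north and weakly west of $v$. For such $S$, $\mathrm{Des}^{+k}(S)$ is the set of all $x\in[n+k]$ that are not the minimum of the cell-set containing them, together with all $j$ such that $j$ is the minimum of the set in some cell $c$, $j+1$ is the minimum of the set in some cell $c'$, and $c'$ lies in a strictly higher row than $c$. *)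

theory Defs
  imports Main
begin

definition is_partition :: "nat list \<Rightarrow> nat \<Rightarrow> bool" where
  "is_partition lam n \<longleftrightarrow> sorted (rev lam) \<and> (\<forall>x\<in>set lam. 0 < x) \<and> sum_list lam = n"

text \<open>Ferrers diagram, cells (row, column), 0-indexed, rows numbered from the top.\<close>
definition ferrers :: "nat list \<Rightarrow> (nat \<times> nat) set" where
  "ferrers lam = {(i, j). i < length lam \<and> j < lam ! i}"

definition conjugate :: "nat list \<Rightarrow> nat list" where
  "conjugate lam = map (\<lambda>j. length (filter (\<lambda>r. j < r) lam))
                       [0..<(case lam of [] \<Rightarrow> 0 | r # _ \<Rightarrow> r)]"

definition SYT_plus :: "nat list \<Rightarrow> nat \<Rightarrow> ((nat \<times> nat) \<Rightarrow> nat set) set" where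
  "SYT_plus lam k = {S.
     (\<forall>u. u \<notin> ferrers lam \<longrightarrow> S u = {}) \<and>
     (\<forall>u\<in>ferrers lam. S u \<noteq> {}) \<and>
     (\<forall>u\<in>ferrers lam. \<forall>v\<in>ferrers lam. u \<noteq> v \<longrightarrow> S u \<inter> S v = {}) \<and>
     (\<Union>u\<in>ferrers lam. S u) = {1..sum_list lam + k} \<and>
     (\<forall>u\<in>ferrers lam. \<forall>v\<in>ferrers lam. u \<noteq> v \<and> fst u \<le> fst v \<and> snd u \<le> snd v
          \<longrightarrow> Max (S u) < Min (S v))}"

definition Des_plus :: "nat list \<Rightarrow> ((nat \<times> nat) \<Rightarrow> nat set) \<Rightarrow> nat set" where
  "Des_plus lam S =
     {x. \<exists>c\<in>ferrers lam. x \<in> S c \<and> x \<noteq> Min (S c)} \<union>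
     {j. \<exists>c\<in>ferrers lam. \<exists>c'\<in>ferrers lam.
           j = Min (S c) \<and> Suc j = Min (S c') \<and> fst c' < fst c}"

end

theory Submission
  imports Defs "HOL-Library.Product_Lexorder"
begin

(*
  Generalise from Ferrers diagrams to an arbitrary finite set D of cells in the grid, and count
  fillings whose descent set is contained in a given set Y rather than equal to it; the two kinds
  of counts determine each other by Moebius inversion on the Boolean lattice.

  The counts with descents in Y obey a recursion in the largest entry N. If N is not the minimum of
  its cell, then N is a descent, its cell is a maximal cell of D, and deleting N leaves a filling
  with N - 1 entries. Otherwise let m be the largest element of Y below N (or 0). No x with
  m < x < N is a descent, so each entry in (m, N] is alone in its cell, these cells form an
  up-closed subset B of D of size N - m, and they are forced to be filled in row-major order;
  the remaining cells carry a filling of D - B by 1, ..., m. Maximal cells and up-closed subsets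
  are carried to each other by transposition, hence by induction on N the counts for D and for its
  transpose agree. For a Ferrers diagram the transpose is the diagram of the conjugate partition.
*)

section \<open>Ferrers diagrams\<close>

lemma finite_ferrers: "finite (ferrers lam)"
proof -
  have "ferrers lam = (SIGMA i:{..<length lam}. {..<lam!i})" by (auto simp: ferrers_def)
  thus ?thesis by simp
qed

lemma card_ferrers: "card (ferrers lam) = sum_list lam"
proof (induction lam rule: rev_induct)
  case Nil thus ?case by (simp add: ferrers_def)
next
  case (snoc a lam)
  have "ferrers (lam @ [a]) = ferrers lam \<union> Pair (length lam) ` {..<a}"
    by (auto simp: ferrers_def nth_append less_Suc_eq)
  moreover have "ferrers lam \<inter> Pair (length lam) ` {..<a} = {}"
    by (auto simp: ferrers_def)
  ultimately show ?case using snoc finite_ferrers[of lam]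
    by (simp add: card_Un_disjoint card_image inj_on_def)
qed

lemma length_filter_less_iff:
  assumes "sorted (rev lam)"
  shows "i < length (filter (\<lambda>r. j < r) lam) \<longleftrightarrow> i < length lam \<and> j < lam ! i"
  using assms
proof (induction lam arbitrary: i)
  case (Cons a t)
  have "sorted (rev t)" and le: "\<forall>x\<in>set t. x \<le> a"
    using Cons.prems by (auto simp: sorted_append)
  show ?case
  proof (cases "j < a")
    case True
    thus ?thesis using Cons.IH[OF \<open>sorted (rev t)\<close>] by (cases i) auto
  next
    case False
    hence "filter (\<lambda>r. j < r) t = []" using le by (auto simp: filter_empty_conv)
    moreover have "i < length (a # t) \<Longrightarrow> (a # t) ! i \<le> a" using le by (cases i) auto
    ultimately show ?thesis using False by auto
  qed
qed simp

lemma ferrers_conjugate: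
  assumes "sorted (rev lam)"
  shows "ferrers (conjugate lam) = prod.swap ` ferrers lam"
proof (cases lam)
  case (Cons a t)
  have le_a: "i < length lam \<Longrightarrow> lam ! i \<le> a" for i
    using assms Cons by (cases i) (auto simp: sorted_append)
  have "(j, i) \<in> ferrers (conjugate lam) \<longleftrightarrow> (i, j) \<in> ferrers lam" for i j
    using length_filter_less_iff[OF assms, of i j] le_a[of i]
    by (auto simp: ferrers_def conjugate_def Cons)
  thus ?thesis by force
qed (simp add: ferrers_def conjugate_def)

lemma sum_list_conjugate:
  assumes "sorted (rev lam)"
  shows "sum_list (conjugate lam) = sum_list lam"
  by (metis assms card_ferrers card_image ferrers_conjugate inj_swap inj_on_subset subset_UNIV)

section \<open>Fillings of finite sets of cells\<close>

definition fillings :: "(nat \<times> nat) set \<Rightarrow> nat \<Rightarrow> ((nat \<times> nat) \<Rightarrow> nat set) set" where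
  "fillings D N = {S.
     (\<forall>u. u \<notin> D \<longrightarrow> S u = {}) \<and>
     (\<forall>u\<in>D. S u \<noteq> {}) \<and>
     (\<forall>u\<in>D. \<forall>v\<in>D. u \<noteq> v \<longrightarrow> S u \<inter> S v = {}) \<and>
     (\<Union>u\<in>D. S u) = {1..N} \<and>
     (\<forall>u\<in>D. \<forall>v\<in>D. u \<noteq> v \<and> fst u \<le> fst v \<and> snd u \<le> snd v \<longrightarrow> Max (S u) < Min (S v))}"

definition descents :: "(nat \<times> nat) set \<Rightarrow> ((nat \<times> nat) \<Rightarrow> nat set) \<Rightarrow> nat set" where
  "descents D S =
     {x. \<exists>c\<in>D. x \<in> S c \<and> x \<noteq> Min (S c)} \<union>
     {j. \<exists>c\<in>D. \<exists>c'\<in>D. j = Min (S c) \<and> Suc j = Min (S c') \<and> fst c' < fst c}"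

lemma SYT_plus_eq_fillings: "SYT_plus lam k = fillings (ferrers lam) (sum_list lam + k)"
  unfolding SYT_plus_def fillings_def ..

lemma Des_plus_eq_descents: "Des_plus lam = descents (ferrers lam)"
  unfolding Des_plus_def descents_def ..

lemma fillingsI:
  assumes "\<And>u. u \<notin> D \<Longrightarrow> S u = {}" and "\<And>u. u \<in> D \<Longrightarrow> S u \<noteq> {}"
    and "\<And>u v. u \<in> D \<Longrightarrow> v \<in> D \<Longrightarrow> u \<noteq> v \<Longrightarrow> S u \<inter> S v = {}"
    and "(\<Union>u\<in>D. S u) = {1..N}"
    and "\<And>u v. u \<in> D \<Longrightarrow> v \<in> D \<Longrightarrow> u \<noteq> v \<Longrightarrow> fst u \<le> fst v \<Longrightarrow> snd u \<le> snd v
           \<Longrightarrow> Max (S u) < Min (S v)"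
  shows "S \<in> fillings D N"
  using assms unfolding fillings_def by (simp add: ball_simps)

context
  fixes S D N assumes S: "S \<in> fillings D N"
begin

lemma fillings_outside: "u \<notin> D \<Longrightarrow> S u = {}"
  using S unfolding fillings_def mem_Collect_eq by meson

lemma fillings_nonempty: "u \<in> D \<Longrightarrow> S u \<noteq> {}"
  using S unfolding fillings_def mem_Collect_eq by meson

lemma fillings_cell_unique: "u \<in> D \<Longrightarrow> v \<in> D \<Longrightarrow> x \<in> S u \<Longrightarrow> x \<in> S v \<Longrightarrow> u = v"
  using S unfolding fillings_def by blast

lemma fillings_Union: "(\<Union>u\<in>D. S u) = {1..N}"
  using S unfolding fillings_def mem_Collect_eq by meson

lemma fillings_Max_less_Min:
  "u \<in> D \<Longrightarrow> v \<in> D \<Longrightarrow> u \<noteq> v \<Longrightarrow> fst u \<le> fst v \<Longrightarrow> snd u \<le> snd v \<Longrightarrow> Max (S u) < Min (S v)"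
  using S unfolding fillings_def mem_Collect_eq by meson

lemma fillings_subset: "S u \<subseteq> {1..N}"
  using fillings_Union fillings_outside by (cases "u \<in> D") auto

lemma fillings_finite: "finite (S u)"
  using fillings_subset by (rule finite_subset) simp

lemma fillings_Min_in: "u \<in> D \<Longrightarrow> Min (S u) \<in> S u"
  using fillings_finite fillings_nonempty by (rule Min_in)

lemma fillings_Max_in: "u \<in> D \<Longrightarrow> Max (S u) \<in> S u"
  using fillings_finite fillings_nonempty by (rule Max_in)

lemma fillings_Min_le: "x \<in> S u \<Longrightarrow> Min (S u) \<le> x"
  using fillings_finite by (rule Min_le)

lemma fillings_le_Max: "x \<in> S u \<Longrightarrow> x \<le> Max (S u)"
  using fillings_finite by (rule Max_ge)

lemma fillings_ex_cell: "x \<in> {1..N} \<Longrightarrow> \<exists>c\<in>D. x \<in> S c"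
  using fillings_Union by blast

lemma descents_subset: "descents D S \<subseteq> {1..N}"
proof
  fix x assume "x \<in> descents D S"
  then obtain c where "x \<in> S c"
    using fillings_Min_in unfolding descents_def by blast
  thus "x \<in> {1..N}" using fillings_subset[of c] by blast
qed

end

lemma finite_fillings:
  assumes "finite D" shows "finite (fillings D N)"
proof (rule finite_subset)
  show "fillings D N \<subseteq> {S. \<forall>u. (u \<in> D \<longrightarrow> S u \<in> Pow {1..N}) \<and> (u \<notin> D \<longrightarrow> S u = {})}"
    using fillings_subset fillings_outside by blast
  show "finite {S. \<forall>u. (u \<in> D \<longrightarrow> S u \<in> Pow {1..N}) \<and> (u \<notin> D \<longrightarrow> S u = ({}::nat set))}"
    using assms by (intro finite_set_of_finite_funs) auto
qed

lemma descents_nonminI: "c \<in> D \<Longrightarrow> x \<in> S c \<Longrightarrow> x \<noteq> Min (S c) \<Longrightarrow> x \<in> descents D S"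
  unfolding descents_def by blast

lemma descents_rowI:
  "c \<in> D \<Longrightarrow> c' \<in> D \<Longrightarrow> Suc (Min (S c)) = Min (S c') \<Longrightarrow> fst c' < fst c \<Longrightarrow> Min (S c) \<in> descents D S"
  unfolding descents_def by blast

definition fillings_within :: "(nat \<times> nat) set \<Rightarrow> nat \<Rightarrow> nat set \<Rightarrow> ((nat \<times> nat) \<Rightarrow> nat set) set" where
  "fillings_within D N Y = {S \<in> fillings D N. descents D S \<subseteq> Y}"

lemma fillings_within_zero: "fillings_within D 0 Y = (if D = {} then {\<lambda>_. {}} else {})"
proof (cases "D = {}")
  case True
  have "fillings {} 0 = {\<lambda>_. {}}"
    by (auto intro: fillingsI dest: fillings_outside)
  thus ?thesis using True by (simp add: fillings_within_def descents_def)
next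
  case False
  have "fillings D 0 = {}"
    using False fillings_nonempty fillings_subset by fastforce
  thus ?thesis using False by (simp add: fillings_within_def)
qed

definition cell_of :: "(nat \<times> nat) set \<Rightarrow> ((nat \<times> nat) \<Rightarrow> nat set) \<Rightarrow> nat \<Rightarrow> nat \<times> nat" where
  "cell_of D S x = (THE c. c \<in> D \<and> x \<in> S c)"

lemma cell_of_eq: "S \<in> fillings D N \<Longrightarrow> c \<in> D \<Longrightarrow> x \<in> S c \<Longrightarrow> cell_of D S x = c"
  unfolding cell_of_def by (blast intro: the_equality dest: fillings_cell_unique)

lemma cell_of_in:
  assumes "S \<in> fillings D N" "x \<in> {1..N}"
  shows "cell_of D S x \<in> D" "x \<in> S (cell_of D S x)"
  using fillings_ex_cell[OF assms] cell_of_eq[OF assms(1)] by auto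

section \<open>Fillings whose largest entry is not the minimum of its cell\<close>

definition maximal_cells :: "(nat \<times> nat) set \<Rightarrow> (nat \<times> nat) set" where
  "maximal_cells D = {c\<in>D. \<forall>v\<in>D. fst c \<le> fst v \<and> snd c \<le> snd v \<longrightarrow> v = c}"

definition top_is_Min :: "(nat \<times> nat) set \<Rightarrow> nat \<Rightarrow> ((nat \<times> nat) \<Rightarrow> nat set) \<Rightarrow> bool" where
  "top_is_Min D N S \<longleftrightarrow> (\<forall>c\<in>D. N \<in> S c \<longrightarrow> Min (S c) = N)"

lemma Min_insert_top:
  assumes S': "S' \<in> fillings D M" and cD: "c \<in> D"
  shows "Min ((S'(c := insert (Suc M) (S' c))) u) = Min (S' u)"
proof -
  have "Min (S' c) < Suc M" using fillings_Min_in[OF S' cD] fillings_subset[OF S', of c] by fastforce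
  moreover have "Min (insert (Suc M) (S' c)) = min (Suc M) (Min (S' c))"
    using fillings_finite[OF S'] fillings_nonempty[OF S' cD] by (rule Min_insert)
  ultimately show ?thesis by (cases "u = c") simp_all
qed

context
  fixes S' D M c
  assumes S': "S' \<in> fillings D M" and c: "c \<in> maximal_cells D"
begin

private abbreviation "S_ext \<equiv> S'(c := insert (Suc M) (S' c))"

lemma fillings_insert_top: "S'(c := insert (Suc M) (S' c)) \<in> fillings D (Suc M)"
proof (rule fillingsI)
  have cD: "c \<in> D" and c_max: "\<And>v. v \<in> D \<Longrightarrow> fst c \<le> fst v \<Longrightarrow> snd c \<le> snd v \<Longrightarrow> v = c"
    using c by (auto simp: maximal_cells_def)
  have new: "Suc M \<notin> S' u" for u using fillings_subset[OF S', of u] by auto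
  show "S_ext u = {}" if "u \<notin> D" for u using that cD fillings_outside[OF S'] by auto
  show "S_ext u \<noteq> {}" if "u \<in> D" for u using that fillings_nonempty[OF S'] by auto
  show "S_ext u \<inter> S_ext v = {}" if "u \<in> D" "v \<in> D" "u \<noteq> v" for u v
    using that new by (auto dest: fillings_cell_unique[OF S'])
  have "(\<Union>u\<in>D. S_ext u) = insert (Suc M) (\<Union>u\<in>D. S' u)"
    using cD unfolding UNION_fun_upd by auto
  thus "(\<Union>u\<in>D. S_ext u) = {1..Suc M}"
    using fillings_Union[OF S'] by (simp add: atLeastAtMostSuc_conv)
  show "Max (S_ext u) < Min (S_ext v)" if "u \<in> D" "v \<in> D" "u \<noteq> v" "fst u \<le> fst v" "snd u \<le> snd v" for u v
  proof -
    have "u \<noteq> c" using that c_max[of v] by auto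
    thus ?thesis using fillings_Max_less_Min[OF S' that] Min_insert_top[OF S' cD, of v] by simp
  qed
qed

lemma descents_insert_top: "descents D (S'(c := insert (Suc M) (S' c))) = insert (Suc M) (descents D S')"
proof -
  have cD: "c \<in> D" using c by (simp add: maximal_cells_def)
  have new: "Suc M \<noteq> Min (S' c)"
    using fillings_subset[OF S', of c] fillings_Min_in[OF S' cD] by auto
  have "x \<in> S_ext u \<longleftrightarrow> x \<in> S' u \<or> (u = c \<and> x = Suc M)" for u x by auto
  hence "{x. \<exists>u\<in>D. x \<in> S_ext u \<and> x \<noteq> Min (S' u)}
      = insert (Suc M) {x. \<exists>u\<in>D. x \<in> S' u \<and> x \<noteq> Min (S' u)}"
    using cD new by auto
  thus ?thesis unfolding descents_def Min_insert_top[OF S' cD] by (simp only: Un_insert_left)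
qed

end

lemma fillings_remove_top:
  assumes S: "S \<in> fillings D (Suc M)" and cD: "c \<in> D"
    and top: "Suc M \<in> S c" "Min (S c) \<noteq> Suc M"
  shows "c \<in> maximal_cells D" and "S(c := S c - {Suc M}) \<in> fillings D M"
proof -
  have Max_c: "Max (S c) = Suc M"
    using fillings_le_Max[OF S top(1)] fillings_Max_in[OF S cD] fillings_subset[OF S, of c] by force
  show "c \<in> maximal_cells D"
    unfolding maximal_cells_def
  proof (intro CollectI conjI ballI impI cD)
    fix v assume v: "v \<in> D" and "fst c \<le> fst v \<and> snd c \<le> snd v"
    hence "v \<noteq> c \<Longrightarrow> Suc M < Min (S v)" using fillings_Max_less_Min[OF S cD v] Max_c by simp
    thus "v = c" using fillings_Min_in[OF S v] fillings_subset[OF S, of v] by fastforce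
  qed
  let ?S' = "S(c := S c - {Suc M})"
  have sub: "?S' u \<subseteq> S u" for u by auto
  have ne: "?S' u \<noteq> {}" if "u \<in> D" for u
    using that fillings_nonempty[OF S] fillings_Min_in[OF S cD] top(2) by (cases "u = c") auto
  have top_only_c: "Suc M \<in> S u \<Longrightarrow> u \<in> D \<Longrightarrow> u = c" for u
    using fillings_cell_unique[OF S _ cD _ top(1)] by blast
  show "?S' \<in> fillings D M"
  proof (rule fillingsI)
    show "?S' u = {}" if "u \<notin> D" for u using that cD fillings_outside[OF S] by auto
    show "?S' u \<noteq> {}" if "u \<in> D" for u using that by (rule ne)
    show "?S' u \<inter> ?S' v = {}" if "u \<in> D" "v \<in> D" "u \<noteq> v" for u v
      using that sub by (blast dest: fillings_cell_unique[OF S])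
    have "(\<Union>u\<in>D. ?S' u) = (\<Union>u\<in>D. S u) - {Suc M}"
      using top_only_c cD by auto
    thus "(\<Union>u\<in>D. ?S' u) = {1..M}" using fillings_Union[OF S] by auto
    show "Max (?S' u) < Min (?S' v)"
      if "u \<in> D" "v \<in> D" "u \<noteq> v" "fst u \<le> fst v" "snd u \<le> snd v" for u v
    proof -
      have "Max (?S' u) \<le> Max (S u)" by (rule Max_mono[OF sub ne[OF that(1)] fillings_finite[OF S]])
      moreover have "Min (S v) \<le> Min (?S' v)" by (rule Min_antimono[OF sub ne[OF that(2)] fillings_finite[OF S]])
      ultimately show ?thesis using fillings_Max_less_Min[OF S that] by linarith
    qed
  qed
qed

lemma top_descent_if_not_top_is_Min:
  assumes "\<not> top_is_Min D N S" shows "N \<in> descents D S"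
proof -
  obtain c where "c \<in> D" "N \<in> S c" "N \<noteq> Min (S c)"
    using assms unfolding top_is_Min_def by force
  thus ?thesis by (rule descents_nonminI)
qed

lemma insert_top_fillings_within:
  assumes S': "S' \<in> fillings_within D M Y" and c: "c \<in> maximal_cells D" and "Suc M \<in> Y"
  shows "S'(c := insert (Suc M) (S' c)) \<in> fillings_within D (Suc M) Y"
    and "\<not> top_is_Min D (Suc M) (S'(c := insert (Suc M) (S' c)))"
proof -
  have S'_fill: "S' \<in> fillings D M" and "c \<in> D" using S' c by (auto simp: fillings_within_def maximal_cells_def)
  show "S'(c := insert (Suc M) (S' c)) \<in> fillings_within D (Suc M) Y"
    using fillings_insert_top[OF S'_fill c] descents_insert_top[OF S'_fill c] S' \<open>Suc M \<in> Y\<close>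
    by (simp add: fillings_within_def)
  have "Min (S' c) \<noteq> Suc M"
    using fillings_subset[OF S'_fill, of c] fillings_Min_in[OF S'_fill \<open>c \<in> D\<close>] by auto
  thus "\<not> top_is_Min D (Suc M) (S'(c := insert (Suc M) (S' c)))"
    using \<open>c \<in> D\<close> Min_insert_top[OF S'_fill \<open>c \<in> D\<close>, of c] unfolding top_is_Min_def by auto
qed

lemma remove_top_fillings_within:
  assumes S: "S \<in> fillings_within D (Suc M) Y" and c: "c \<in> D" "Suc M \<in> S c" "Min (S c) \<noteq> Suc M"
  shows "c \<in> maximal_cells D" and "S(c := S c - {Suc M}) \<in> fillings_within D M Y"
proof -
  have S_fill: "S \<in> fillings D (Suc M)" using S by (simp add: fillings_within_def)
  note removed = fillings_remove_top[OF S_fill c]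
  show "c \<in> maximal_cells D" by (rule removed(1))
  have "(S(c := S c - {Suc M}))(c := insert (Suc M) ((S(c := S c - {Suc M})) c)) = S"
    using c(2) by (simp add: insert_absorb)
  hence "descents D S = insert (Suc M) (descents D (S(c := S c - {Suc M})))"
    using descents_insert_top[OF removed(2,1)] by simp
  thus "S(c := S c - {Suc M}) \<in> fillings_within D M Y"
    using S removed(2) by (simp add: fillings_within_def)
qed

lemma card_fillings_within_not_top_is_Min:
  assumes "finite D"
  shows "card {S \<in> fillings_within D (Suc M) Y. \<not> top_is_Min D (Suc M) S}
       = (if Suc M \<in> Y then card (maximal_cells D) * card (fillings_within D M Y) else 0)"
proof (cases "Suc M \<in> Y")
  case False
  hence "{S \<in> fillings_within D (Suc M) Y. \<not> top_is_Min D (Suc M) S} = {}"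
    using top_descent_if_not_top_is_Min unfolding fillings_within_def by blast
  thus ?thesis using False by (metis card.empty)
next
  case True
  let ?A = "maximal_cells D \<times> fillings_within D M Y"
  let ?B = "{S \<in> fillings_within D (Suc M) Y. \<not> top_is_Min D (Suc M) S}"
  let ?add = "\<lambda>(c, S'). S'(c := insert (Suc M) (S' c))"
  let ?del = "\<lambda>S. let c = cell_of D S (Suc M) in (c, S(c := S c - {Suc M}))"
  have top_cell: "\<exists>c\<in>D. Suc M \<in> S c \<and> Min (S c) \<noteq> Suc M \<and> ?del S = (c, S(c := S c - {Suc M}))"
    if S: "S \<in> ?B" for S
  proof -
    obtain c where c: "c \<in> D" "Suc M \<in> S c" "Min (S c) \<noteq> Suc M"
      using S unfolding top_is_Min_def by blast
    thus ?thesis using cell_of_eq[of S D "Suc M", OF _ c(1,2)] S by (auto simp: fillings_within_def)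
  qed
  have "bij_betw ?add ?A ?B"
  proof (rule bij_betw_byWitness[where f' = ?del])
    show "\<forall>a\<in>?A. ?del (?add a) = a"
    proof
      fix a assume "a \<in> ?A"
      then obtain c S' where a: "a = (c, S')" and c: "c \<in> maximal_cells D" and S': "S' \<in> fillings D M"
        by (auto simp: fillings_within_def)
      have "c \<in> D" using c by (simp add: maximal_cells_def)
      have "cell_of D (S'(c := insert (Suc M) (S' c))) (Suc M) = c"
        using cell_of_eq[OF fillings_insert_top[OF S' c] \<open>c \<in> D\<close>] by simp
      moreover have "Suc M \<notin> S' c" using fillings_subset[OF S', of c] by auto
      ultimately show "?del (?add a) = a" by (simp add: a)
    qed
    show "\<forall>S\<in>?B. ?add (?del S) = S"
      using top_cell by (fastforce simp: insert_absorb)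
    show "?add ` ?A \<subseteq> ?B"
      using insert_top_fillings_within True by auto
    show "?del ` ?B \<subseteq> ?A"
      using top_cell remove_top_fillings_within by fastforce
  qed
  hence "card ?B = card ?A" by (simp add: bij_betw_same_card)
  thus ?thesis using True by (simp add: card_cartesian_product)
qed

section \<open>Fillings whose largest entry is the minimum of its cell\<close>

definition rank :: "'a::linorder set \<Rightarrow> 'a \<Rightarrow> nat" where
  "rank B u = card {v \<in> B. v < u}"

context
  fixes B :: "'a::linorder set" assumes fin: "finite B"
begin

lemma rank_less_card: "u \<in> B \<Longrightarrow> rank B u < card B"
  unfolding rank_def using fin by (intro psubset_card_mono) auto

lemma rank_strict_mono: "u \<in> B \<Longrightarrow> u < v \<Longrightarrow> rank B u < rank B v"
  unfolding rank_def using fin by (intro psubset_card_mono) auto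

lemma rank_less_iff: "u \<in> B \<Longrightarrow> v \<in> B \<Longrightarrow> rank B u < rank B v \<longleftrightarrow> u < v"
  using rank_strict_mono by (metis not_less_iff_gr_or_eq order_less_asym)

lemma bij_betw_rank: "bij_betw (rank B) B {..<card B}"
proof -
  have "inj_on (rank B) B"
    by (rule inj_onI) (metis rank_less_iff linorder_neq_iff less_irrefl)
  moreover have "rank B ` B \<subseteq> {..<card B}" using rank_less_card by auto
  ultimately show ?thesis
    using fin by (simp add: bij_betw_def card_image card_subset_eq)
qed

end

lemma rank_image_strict_mono_on:
  fixes f :: "nat \<Rightarrow> 'a::linorder"
  assumes f: "strict_mono_on {a..b} f" and x: "x \<in> {a..b}"
  shows "rank (f ` {a..b}) (f x) = x - a"
proof -
  have "{v \<in> f ` {a..b}. v < f x} = f ` {a..<x}"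
    using x strict_mono_on_less[OF f] by auto
  moreover have "inj_on f {a..<x}"
    using strict_mono_on_imp_inj_on[OF f] by (rule inj_on_subset) (use x in auto)
  ultimately show ?thesis by (simp add: rank_def card_image)
qed

lemma lex_less_of_le_le: "fst u \<le> fst v \<Longrightarrow> snd u \<le> snd v \<Longrightarrow> u \<noteq> v \<Longrightarrow> u < (v :: 'a::linorder \<times> 'b::linorder)"
  by (auto simp: less_prod_def prod_eq_iff)

definition upper_subsets :: "(nat \<times> nat) set \<Rightarrow> nat \<Rightarrow> (nat \<times> nat) set set" where
  "upper_subsets D j = {B. B \<subseteq> D \<and> card B = j \<and> (\<forall>u\<in>D - B. \<forall>v\<in>B. \<not> (fst v \<le> fst u \<and> snd v \<le> snd u))}"

(* Pairs are ordered lexicographically, so rank B enumerates B in row-major order. *)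

definition fill_upper :: "nat \<Rightarrow> (nat \<times> nat) set \<Rightarrow> ((nat \<times> nat) \<Rightarrow> nat set) \<Rightarrow> (nat \<times> nat) \<Rightarrow> nat set" where
  "fill_upper m B S' u = (if u \<in> B then {Suc m + rank B u} else S' u)"

definition erase :: "(nat \<times> nat) set \<Rightarrow> ((nat \<times> nat) \<Rightarrow> nat set) \<Rightarrow> (nat \<times> nat) \<Rightarrow> nat set" where
  "erase B S u = (if u \<in> B then {} else S u)"

definition cells_above :: "(nat \<times> nat) set \<Rightarrow> nat \<Rightarrow> ((nat \<times> nat) \<Rightarrow> nat set) \<Rightarrow> (nat \<times> nat) set" where
  "cells_above D m S = {c \<in> D. m < Min (S c)}"

context
  fixes D B S' m N
  assumes fin: "finite D" and B: "B \<in> upper_subsets D (N - m)"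
    and S': "S' \<in> fillings (D - B) m" and le: "m \<le> N"
begin

private abbreviation "S_fill \<equiv> fill_upper m B S'"

private lemma
  shows B_sub: "B \<subseteq> D" and card_B: "card B = N - m" and fin_B: "finite B"
    and upper: "\<And>u v. u \<in> D - B \<Longrightarrow> v \<in> B \<Longrightarrow> \<not> (fst v \<le> fst u \<and> snd v \<le> snd u)"
  using B fin finite_subset unfolding upper_subsets_def by auto

private lemma S_fill_in: "u \<in> B \<Longrightarrow> S_fill u = {Suc m + rank B u}"
  and S_fill_out: "u \<notin> B \<Longrightarrow> S_fill u = S' u"
  by (simp_all add: fill_upper_def)

private lemma S'_le: "x \<in> S' u \<Longrightarrow> x \<le> m"
  using fillings_subset[OF S'] by fastforce

private lemma S_fill_range: "u \<in> B \<Longrightarrow> m < Min (S_fill u) \<and> Min (S_fill u) \<le> N"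
  using rank_less_card[OF fin_B, of u] card_B le by (simp add: S_fill_in)

lemma fill_upper_fillings: "fill_upper m B S' \<in> fillings D N"
proof (rule fillingsI)
  show "S_fill u = {}" if "u \<notin> D" for u
    using that B_sub fillings_outside[OF S'] by (auto simp: fill_upper_def)
  show "S_fill u \<noteq> {}" if "u \<in> D" for u
    using that fillings_nonempty[OF S'] by (auto simp: fill_upper_def)
  show "S_fill u \<inter> S_fill v = {}" if "u \<in> D" "v \<in> D" "u \<noteq> v" for u v
    using that bij_betw_rank[OF fin_B] fillings_cell_unique[OF S', of u v]
    by (cases "u \<in> B"; cases "v \<in> B") (auto simp: S_fill_in S_fill_out bij_betw_def inj_on_eq_iff dest: S'_le)
  have "(\<Union>u\<in>D. S_fill u) = (\<Union>u\<in>B. S_fill u) \<union> (\<Union>u\<in>D - B. S_fill u)"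
    using B_sub by blast
  also have "\<dots> = (\<lambda>u. Suc m + rank B u) ` B \<union> (\<Union>u\<in>D - B. S' u)"
    by (simp add: S_fill_in S_fill_out UNION_singleton_eq_range)
  also have "rank B ` B = {..<N - m}"
    using bij_betw_rank[OF fin_B] card_B by (simp add: bij_betw_def)
  hence "(\<lambda>u. Suc m + rank B u) ` B = plus (Suc m) ` {..<N - m}"
    by (metis image_image)
  also have "\<dots> = {0 + Suc m..<N - m + Suc m}"
    by (simp only: lessThan_atLeast0 image_add_atLeastLessThan)
  also have "\<dots> = {Suc m..N}"
    using le by (simp add: atLeastLessThanSuc_atLeastAtMost)
  also have "{Suc m..N} \<union> (\<Union>u\<in>D - B. S' u) = {1..N}"
    using fillings_Union[OF S'] le by auto
  finally show "(\<Union>u\<in>D. S_fill u) = {1..N}" .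
  show "Max (S_fill u) < Min (S_fill v)" if "u \<in> D" "v \<in> D" "u \<noteq> v" "fst u \<le> fst v" "snd u \<le> snd v" for u v
  proof (cases "v \<in> B")
    case True
    show ?thesis
    proof (cases "u \<in> B")
      case True
      thus ?thesis using \<open>v \<in> B\<close> rank_strict_mono[OF fin_B True lex_less_of_le_le[OF that(4,5,3)]]
        by (simp add: S_fill_in)
    next
      case False
      thus ?thesis using True that fillings_Max_in[OF S', of u] S'_le S_fill_range[OF True]
        by (simp add: S_fill_out) (meson Diff_iff le_less_trans not_le)
    qed
  next
    case False
    hence "u \<notin> B" using upper[of v u] that by auto
    thus ?thesis using False that fillings_Max_less_Min[OF S'] by (simp add: S_fill_out)
  qed
qed

lemma descents_fill_upper: "descents D (fill_upper m B S') \<subseteq> insert m (descents (D - B) S')"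
proof
  fix x assume "x \<in> descents D S_fill"
  then consider (nonmin) c where "c \<in> D" "x \<in> S_fill c" "x \<noteq> Min (S_fill c)"
    | (row) c c' where "c \<in> D" "c' \<in> D" "x = Min (S_fill c)" "Suc x = Min (S_fill c')" "fst c' < fst c"
    unfolding descents_def by blast
  thus "x \<in> insert m (descents (D - B) S')"
  proof cases
    case nonmin
    hence "c \<notin> B" by (auto simp: S_fill_in)
    thus ?thesis using nonmin by (auto simp: S_fill_out intro: descents_nonminI)
  next
    case row
    have below: "Min (S' u) \<le> m" if "u \<in> D - B" for u
      using that fillings_Min_in[OF S'] S'_le by blast
    show ?thesis
    proof (cases "c \<in> B"; cases "c' \<in> B")
      assume "c \<in> B" "c' \<in> B"
      hence "rank B c < rank B c'" using row by (simp add: S_fill_in)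
      hence "c < c'" using rank_less_iff[OF fin_B \<open>c \<in> B\<close> \<open>c' \<in> B\<close>] by simp
      thus ?thesis using row(5) by (simp add: less_prod_def)
    next
      assume "c \<in> B" "c' \<notin> B"
      thus ?thesis using row S_fill_range[of c] below[of c'] by (simp add: S_fill_out)
    next
      assume "c \<notin> B" "c' \<in> B"
      thus ?thesis using row S_fill_range[of c'] below[of c] by (simp add: S_fill_out)
    next
      assume "c \<notin> B" "c' \<notin> B"
      thus ?thesis using row by (auto simp: S_fill_out intro: descents_rowI)
    qed
  qed
qed

lemma top_is_Min_fill_upper:
  assumes "m < N" shows "top_is_Min D N (fill_upper m B S')"
  unfolding top_is_Min_def
proof (intro ballI impI)
  fix c assume "N \<in> S_fill c"
  moreover have "c \<in> B" using calculation assms S'_le[of N c] by (cases "c \<in> B") (simp_all add: S_fill_out)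
  ultimately show "Min (S_fill c) = N" by (simp add: S_fill_in)
qed

lemma cells_above_fill_upper: "cells_above D m (fill_upper m B S') = B"
proof -
  have "m < Min (S_fill c) \<longleftrightarrow> c \<in> B" if "c \<in> D" for c
    using that S_fill_range[of c] fillings_Min_in[OF S', of c] S'_le[of "Min (S' c)" c]
    by (cases "c \<in> B") (auto simp: S_fill_out)
  thus ?thesis using B_sub by (auto simp: cells_above_def)
qed

lemma fill_upper_fillings_within:
  assumes "descents (D - B) S' \<subseteq> Y" and "m = 0 \<or> m \<in> Y"
  shows "fill_upper m B S' \<in> fillings_within D N Y"
proof -
  have "descents D S_fill \<subseteq> insert m Y" using descents_fill_upper assms(1) by blast
  moreover have "m \<in> Y \<or> m \<notin> descents D S_fill"
    using descents_subset[OF fill_upper_fillings] assms(2) by auto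
  ultimately show ?thesis using fill_upper_fillings by (auto simp: fillings_within_def)
qed

lemma erase_fill_upper: "erase B (fill_upper m B S') = S'"
proof
  fix u show "erase B S_fill u = S' u"
    using fillings_outside[OF S', of u] by (cases "u \<in> B") (simp_all add: erase_def S_fill_out)
qed

end

lemma descents_erase_subset: "descents (D - B) (erase B S) \<subseteq> descents D S"
  unfolding descents_def erase_def by fastforce

context
  fixes D S N Y m
  assumes S: "S \<in> fillings D N" and Y: "descents D S \<subseteq> Y" and top: "top_is_Min D N S"
    and m: "m < N" and gap: "\<And>x. m < x \<Longrightarrow> x < N \<Longrightarrow> x \<notin> Y"
begin

lemma entry_above_is_Min:
  assumes c: "c \<in> D" "x \<in> S c" and "m < x"
  shows "x = Min (S c)"
proof (cases "x = N")
  case False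
  hence "x \<notin> descents D S" using Y gap[of x] \<open>m < x\<close> fillings_subset[OF S, of c] c(2) by fastforce
  thus ?thesis using c by (blast intro: descents_nonminI)
qed (use top c in \<open>simp add: top_is_Min_def\<close>)

lemma entry_in_cells_above_iff:
  assumes "c \<in> D" "x \<in> S c"
  shows "c \<in> cells_above D m S \<longleftrightarrow> m < x"
  using assms entry_above_is_Min[OF assms] fillings_Min_le[OF S assms(2)]
  by (auto simp: cells_above_def)

lemma erase_cells_above_fillings: "erase (cells_above D m S) S \<in> fillings (D - cells_above D m S) m"
proof (rule fillingsI)
  let ?B = "cells_above D m S"
  show "erase ?B S u = {}" if "u \<notin> D - ?B" for u
    using that fillings_outside[OF S, of u] by (auto simp: erase_def)
  show "erase ?B S u \<noteq> {}" if "u \<in> D - ?B" for u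
    using that fillings_nonempty[OF S] by (simp add: erase_def)
  show "erase ?B S u \<inter> erase ?B S v = {}" if "u \<in> D - ?B" "v \<in> D - ?B" "u \<noteq> v" for u v
    using that fillings_cell_unique[OF S, of u v] by (auto simp: erase_def)
  show "(\<Union>u\<in>D - ?B. erase ?B S u) = {1..m}"
  proof (intro equalityI subsetI)
    fix x assume "x \<in> (\<Union>u\<in>D - ?B. erase ?B S u)"
    then obtain u where "u \<in> D" "u \<notin> ?B" "x \<in> S u" by (auto simp: erase_def)
    thus "x \<in> {1..m}" using entry_in_cells_above_iff fillings_subset[OF S, of u] by fastforce
  next
    fix x assume x: "x \<in> {1..m}"
    then obtain u where u: "u \<in> D" "x \<in> S u" using fillings_ex_cell[OF S, of x] m by auto
    thus "x \<in> (\<Union>u\<in>D - ?B. erase ?B S u)"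
      using x entry_in_cells_above_iff[OF u] by (auto simp: erase_def)
  qed
  show "Max (erase ?B S u) < Min (erase ?B S v)"
    if "u \<in> D - ?B" "v \<in> D - ?B" "u \<noteq> v" "fst u \<le> fst v" "snd u \<le> snd v" for u v
    using that fillings_Max_less_Min[OF S, of u v] by (simp add: erase_def)
qed

lemma erase_cells_above_fillings_within:
  "erase (cells_above D m S) S \<in> fillings_within (D - cells_above D m S) m Y"
  using erase_cells_above_fillings descents_erase_subset[of D "cells_above D m S" S] Y
  unfolding fillings_within_def by blast

lemma cell_of_above:
  assumes "x \<in> {Suc m..N}"
  shows "cell_of D S x \<in> cells_above D m S" and "Min (S (cell_of D S x)) = x"
proof -
  have x: "x \<in> {1..N}" using assms by auto
  note c = cell_of_in[OF S x]
  show "cell_of D S x \<in> cells_above D m S" using entry_in_cells_above_iff[OF c] assms by simp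
  show "Min (S (cell_of D S x)) = x" using entry_above_is_Min[OF c] assms by simp
qed

lemma cell_of_less_Suc:
  assumes "x \<in> {Suc m..<N}"
  shows "cell_of D S x < cell_of D S (Suc x)"
proof -
  define c c' where "c = cell_of D S x" and "c' = cell_of D S (Suc x)"
  have cD: "c \<in> D" "c' \<in> D" and Min_c: "Min (S c) = x" "Min (S c') = Suc x"
    using cell_of_above[of x] cell_of_above[of "Suc x"] assms
    by (auto simp: c_def c'_def cells_above_def)
  have "x \<notin> descents D S" using Y gap assms by auto
  hence "\<not> fst c' < fst c" using descents_rowI[OF cD] Min_c by metis
  moreover have "\<not> (fst c' \<le> fst c \<and> snd c' \<le> snd c)"
  proof
    assume "fst c' \<le> fst c \<and> snd c' \<le> snd c"
    moreover have "c' \<noteq> c" using Min_c by auto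
    ultimately have "Max (S c') < x" using fillings_Max_less_Min[OF S cD(2,1)] Min_c by simp
    thus False using fillings_le_Max[OF S fillings_Min_in[OF S cD(2)]] Min_c by simp
  qed
  ultimately show "c < c'" by (auto simp: less_prod_def)
qed

lemma strict_mono_on_cell_of: "strict_mono_on {Suc m..N} (cell_of D S)"
proof (rule strict_mono_onI)
  fix x y assume "x \<in> {Suc m..N}" "y \<in> {Suc m..N}" "x < y"
  moreover have "{x..<y} \<subseteq> {Suc m..<N}" using calculation by auto
  ultimately show "cell_of D S x < cell_of D S y"
    using cell_of_less_Suc lift_Suc_mono_less_ivl by blast
qed

lemma cells_above_eq_image: "cells_above D m S = cell_of D S ` {Suc m..N}"
proof
  show "cell_of D S ` {Suc m..N} \<subseteq> cells_above D m S" using cell_of_above(1) by blast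
  show "cells_above D m S \<subseteq> cell_of D S ` {Suc m..N}"
  proof
    fix c assume c: "c \<in> cells_above D m S"
    hence cD: "c \<in> D" and "m < Min (S c)" by (auto simp: cells_above_def)
    note Min_in = fillings_Min_in[OF S cD]
    have "c = cell_of D S (Min (S c))" by (rule cell_of_eq[OF S cD Min_in, symmetric])
    moreover have "Min (S c) \<in> {Suc m..N}"
      using \<open>m < Min (S c)\<close> Min_in fillings_subset[OF S, of c] by auto
    ultimately show "c \<in> cell_of D S ` {Suc m..N}" by (rule image_eqI)
  qed
qed

lemma cells_above_upper_subsets: "cells_above D m S \<in> upper_subsets D (N - m)"
  unfolding upper_subsets_def
proof (intro CollectI conjI ballI notI)
  show "cells_above D m S \<subseteq> D" by (auto simp: cells_above_def)
  show "card (cells_above D m S) = N - m"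
    unfolding cells_above_eq_image
    using strict_mono_on_imp_inj_on[OF strict_mono_on_cell_of] by (simp add: card_image)
  fix u v assume u: "u \<in> D - cells_above D m S" and v: "v \<in> cells_above D m S"
    and le: "fst v \<le> fst u \<and> snd v \<le> snd u"
  have "v \<in> D" "u \<in> D" "v \<noteq> u" "m < Min (S v)" "\<not> m < Min (S u)"
    using u v by (auto simp: cells_above_def)
  moreover have "Max (S v) < Min (S u)"
    using fillings_Max_less_Min[OF S \<open>v \<in> D\<close> \<open>u \<in> D\<close> \<open>v \<noteq> u\<close>] le by simp
  moreover have "Min (S v) \<le> Max (S v)" using fillings_Min_in[OF S \<open>v \<in> D\<close>] fillings_le_Max[OF S] by blast
  ultimately show False by linarith
qed

lemma fill_upper_erase_cells_above: "fill_upper m (cells_above D m S) (erase (cells_above D m S) S) = S"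
proof
  fix u
  show "fill_upper m (cells_above D m S) (erase (cells_above D m S) S) u = S u"
  proof (cases "u \<in> cells_above D m S")
    case True
    then obtain x where x: "x \<in> {Suc m..N}" "u = cell_of D S x"
      unfolding cells_above_eq_image by blast
    have "rank (cells_above D m S) u = x - Suc m"
      unfolding cells_above_eq_image x(2) by (rule rank_image_strict_mono_on[OF strict_mono_on_cell_of x(1)])
    moreover have "S u = {x}"
    proof -
      have "u \<in> D" "Min (S u) = x" using cell_of_above[OF x(1)] x(2) by (auto simp: cells_above_def)
      moreover have "y = Min (S u)" if "y \<in> S u" for y
      proof -
        have "m < y" using fillings_Min_le[OF S that] \<open>Min (S u) = x\<close> x(1) by simp
        thus ?thesis by (rule entry_above_is_Min[OF \<open>u \<in> D\<close> that])
      qed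
      ultimately show ?thesis using fillings_Min_in[OF S \<open>u \<in> D\<close>] by blast
    qed
    ultimately show ?thesis using True x(1) by (simp add: fill_upper_def)
  qed (simp add: fill_upper_def erase_def)
qed

end

lemma card_fillings_within_top_is_Min:
  assumes fin: "finite D" and m: "m < N" and m_Y: "m = 0 \<or> m \<in> Y"
    and gap: "\<And>x. m < x \<Longrightarrow> x < N \<Longrightarrow> x \<notin> Y"
  shows "card {S \<in> fillings_within D N Y. top_is_Min D N S}
       = (\<Sum>B\<in>upper_subsets D (N - m). card (fillings_within (D - B) m Y))"
proof -
  let ?A = "{S \<in> fillings_within D N Y. top_is_Min D N S}"
  let ?P = "SIGMA B : upper_subsets D (N - m). fillings_within (D - B) m Y"
  let ?split = "\<lambda>S. (cells_above D m S, erase (cells_above D m S) S)"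
  let ?join = "\<lambda>(B, S'). fill_upper m B S'"
  note le = less_imp_le[OF m]
  have "bij_betw ?split ?A ?P"
  proof (rule bij_betw_byWitness[where f' = ?join])
    show "\<forall>S\<in>?A. ?join (?split S) = S"
      using fill_upper_erase_cells_above m gap by (auto simp: fillings_within_def)
    show "\<forall>P\<in>?P. ?split (?join P) = P"
      using cells_above_fill_upper erase_fill_upper fin le by (auto simp: fillings_within_def)
    show "?split ` ?A \<subseteq> ?P"
    proof (rule image_subsetI)
      fix S assume "S \<in> ?A"
      hence S: "S \<in> fillings D N" "descents D S \<subseteq> Y" "top_is_Min D N S"
        by (auto simp: fillings_within_def)
      show "?split S \<in> ?P"
        using cells_above_upper_subsets[OF S m gap] erase_cells_above_fillings_within[OF S m gap]
        by simp
    qed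
    show "?join ` ?P \<subseteq> ?A"
      using fill_upper_fillings_within[OF fin _ _ le _ m_Y] top_is_Min_fill_upper[OF fin _ _ le m]
      by (auto simp: fillings_within_def)
  qed
  hence "card ?A = card ?P" by (rule bij_betw_same_card)
  also have "\<dots> = (\<Sum>B\<in>upper_subsets D (N - m). card (fillings_within (D - B) m Y))"
  proof (rule card_SigmaI)
    show "finite (upper_subsets D (N - m))"
      using fin by (auto simp: upper_subsets_def intro: finite_subset[of _ "Pow D"])
    show "\<forall>B\<in>upper_subsets D (N - m). finite (fillings_within (D - B) m Y)"
      using fin finite_fillings by (simp add: fillings_within_def)
  qed
  finally show ?thesis .
qed

section \<open>The recursion and its invariance under transposition\<close>

definition max_below :: "nat set \<Rightarrow> nat \<Rightarrow> nat" where
  "max_below Y N = Max (insert 0 {y \<in> Y. y < N})"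

lemma max_below:
  assumes "0 < N"
  shows "max_below Y N < N" and "max_below Y N = 0 \<or> max_below Y N \<in> Y"
    and "\<And>x. max_below Y N < x \<Longrightarrow> x < N \<Longrightarrow> x \<notin> Y"
proof -
  have fin: "finite (insert 0 {y \<in> Y. y < N})" by simp
  have "max_below Y N \<in> insert 0 {y \<in> Y. y < N}"
    unfolding max_below_def using fin by (rule Max_in) simp
  thus "max_below Y N < N" "max_below Y N = 0 \<or> max_below Y N \<in> Y" using assms by auto
  show "x \<notin> Y" if "max_below Y N < x" "x < N" for x
    using that Max_ge[OF fin, of x] unfolding max_below_def by auto
qed

lemma card_fillings_within_Suc:
  fixes M :: nat and Y :: "nat set"
  assumes fin: "finite D"
  defines "m \<equiv> max_below Y (Suc M)"
  shows "card (fillings_within D (Suc M) Y)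
       = (\<Sum>B\<in>upper_subsets D (Suc M - m). card (fillings_within (D - B) m Y))
         + (if Suc M \<in> Y then card (maximal_cells D) * card (fillings_within D M Y) else 0)"
proof -
  let ?T = "{S \<in> fillings_within D (Suc M) Y. top_is_Min D (Suc M) S}"
  let ?R = "{S \<in> fillings_within D (Suc M) Y. \<not> top_is_Min D (Suc M) S}"
  have "card (?T \<union> ?R) = card ?T + card ?R"
    using finite_fillings[OF fin] by (intro card_Un_disjoint) (auto simp: fillings_within_def)
  moreover have "?T \<union> ?R = fillings_within D (Suc M) Y" by blast
  ultimately have "card (fillings_within D (Suc M) Y) = card ?T + card ?R" by simp
  thus ?thesis
    using card_fillings_within_top_is_Min[OF fin max_below[of "Suc M" Y, folded m_def]]
      card_fillings_within_not_top_is_Min[OF fin]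
    by simp
qed

lemma maximal_cells_swap_mem: "c \<in> maximal_cells D \<Longrightarrow> prod.swap c \<in> maximal_cells (prod.swap ` D)"
  unfolding maximal_cells_def
proof (elim CollectE conjE, intro CollectI conjI ballI impI)
  assume "c \<in> D" and c_max: "\<forall>v\<in>D. fst c \<le> fst v \<and> snd c \<le> snd v \<longrightarrow> v = c"
  show "prod.swap c \<in> prod.swap ` D" using \<open>c \<in> D\<close> by blast
  fix v assume "v \<in> prod.swap ` D" "fst (prod.swap c) \<le> fst v \<and> snd (prod.swap c) \<le> snd v"
  thus "v = prod.swap c" using c_max by (auto simp: image_iff)
qed

lemma maximal_cells_swap: "maximal_cells (prod.swap ` D) = prod.swap ` maximal_cells D"
proof
  show "prod.swap ` maximal_cells D \<subseteq> maximal_cells (prod.swap ` D)"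
    using maximal_cells_swap_mem by blast
  show "maximal_cells (prod.swap ` D) \<subseteq> prod.swap ` maximal_cells D"
  proof
    fix c assume "c \<in> maximal_cells (prod.swap ` D)"
    hence "prod.swap c \<in> maximal_cells D"
      using maximal_cells_swap_mem[of c "prod.swap ` D"] by (simp add: image_image)
    thus "c \<in> prod.swap ` maximal_cells D" by (metis image_eqI swap_swap)
  qed
qed

lemma upper_subsets_swap_mem: "B \<in> upper_subsets D j \<Longrightarrow> prod.swap ` B \<in> upper_subsets (prod.swap ` D) j"
  unfolding upper_subsets_def
proof (elim CollectE conjE, intro CollectI conjI ballI)
  assume "B \<subseteq> D" "card B = j" and upper: "\<forall>u\<in>D - B. \<forall>v\<in>B. \<not> (fst v \<le> fst u \<and> snd v \<le> snd u)"
  show "prod.swap ` B \<subseteq> prod.swap ` D" using \<open>B \<subseteq> D\<close> by blast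
  show "card (prod.swap ` B) = j" using \<open>card B = j\<close> by (simp add: card_image)
  fix u v assume "u \<in> prod.swap ` D - prod.swap ` B" "v \<in> prod.swap ` B"
  then obtain u' v' where "u = prod.swap u'" "u' \<in> D - B" "v = prod.swap v'" "v' \<in> B" by auto
  thus "\<not> (fst v \<le> fst u \<and> snd v \<le> snd u)" using upper by auto
qed

lemma upper_subsets_swap: "upper_subsets (prod.swap ` D) j = image prod.swap ` upper_subsets D j"
proof
  show "image prod.swap ` upper_subsets D j \<subseteq> upper_subsets (prod.swap ` D) j"
    using upper_subsets_swap_mem by blast
  show "upper_subsets (prod.swap ` D) j \<subseteq> image prod.swap ` upper_subsets D j"
  proof
    fix B assume "B \<in> upper_subsets (prod.swap ` D) j"
    hence "prod.swap ` B \<in> upper_subsets D j"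
      using upper_subsets_swap_mem[of B "prod.swap ` D"] by (simp add: image_image)
    moreover have "B = prod.swap ` prod.swap ` B" by (simp add: image_image)
    ultimately show "B \<in> image prod.swap ` upper_subsets D j" by blast
  qed
qed

lemma card_fillings_within_swap:
  "finite D \<Longrightarrow> card (fillings_within (prod.swap ` D) N Y) = card (fillings_within D N Y)"
proof (induction N arbitrary: D rule: less_induct)
  case (less N)
  show ?case
  proof (cases N)
    case 0
    thus ?thesis by (simp add: fillings_within_zero)
  next
    case (Suc M)
    define m where "m = max_below Y (Suc M)"
    have "m < N" using max_below(1)[of "Suc M" Y] Suc by (simp add: m_def)
    have "(\<Sum>B\<in>upper_subsets (prod.swap ` D) (Suc M - m). card (fillings_within (prod.swap ` D - B) m Y))
        = (\<Sum>B\<in>upper_subsets D (Suc M - m). card (fillings_within (prod.swap ` (D - B)) m Y))"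
      unfolding upper_subsets_swap
      by (subst sum.reindex) (auto simp: inj_on_def inj_image_eq_iff image_set_diff)
    also have "\<dots> = (\<Sum>B\<in>upper_subsets D (Suc M - m). card (fillings_within (D - B) m Y))"
      using less.IH[OF \<open>m < N\<close>] less.prems by simp
    finally show ?thesis
      using card_fillings_within_Suc[of "prod.swap ` D" M Y] card_fillings_within_Suc[OF less.prems, of M Y]
        less.IH[OF _ less.prems, of M] less.prems
      by (simp add: Suc m_def[symmetric] maximal_cells_swap card_image)
  qed
qed

section \<open>Moebius inversion\<close>

lemma eq_if_sum_Pow_eq:
  fixes f g :: "'a set \<Rightarrow> 'b::cancel_comm_monoid_add"
  assumes sums: "\<And>X. finite X \<Longrightarrow> (\<Sum>Z\<in>Pow X. f Z) = (\<Sum>Z\<in>Pow X. g Z)" and "finite X"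
  shows "f X = g X"
  using \<open>finite X\<close>
proof (induction X rule: finite_psubset_induct)
  case (psubset X)
  have "(\<Sum>Z\<in>Pow X - {X}. f Z) = (\<Sum>Z\<in>Pow X - {X}. g Z)"
    using psubset.IH by (intro sum.cong) auto
  moreover have "(\<Sum>Z\<in>Pow X. h Z) = h X + (\<Sum>Z\<in>Pow X - {X}. h Z)" for h :: "'a set \<Rightarrow> 'b"
    using psubset.hyps by (intro sum.remove) auto
  ultimately show ?case using sums[OF psubset.hyps] by simp
qed

lemma sum_Pow_card_eq:
  assumes "finite A" "finite X"
  shows "(\<Sum>Z\<in>Pow X. card {S \<in> A. h S = Z}) = card {S \<in> A. h S \<subseteq> X}"
proof -
  have "card (\<Union>Z\<in>Pow X. {S \<in> A. h S = Z}) = (\<Sum>Z\<in>Pow X. card {S \<in> A. h S = Z})"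
    using assms by (intro card_UN_disjoint) auto
  moreover have "(\<Union>Z\<in>Pow X. {S \<in> A. h S = Z}) = {S \<in> A. h S \<subseteq> X}" by auto
  ultimately show ?thesis by simp
qed

lemma card_descents_eq_swap:
  assumes "finite D" and "finite X"
  shows "card {S \<in> fillings D N. descents D S = X}
       = card {S \<in> fillings (prod.swap ` D) N. descents (prod.swap ` D) S = X}"
proof (rule eq_if_sum_Pow_eq[OF _ \<open>finite X\<close>])
  fix X :: "nat set" assume "finite X"
  have "(\<Sum>Z\<in>Pow X. card {S \<in> fillings D' N. descents D' S = Z}) = card (fillings_within D' N X)"
    if "finite D'" for D'
    unfolding fillings_within_def using finite_fillings[OF that] \<open>finite X\<close> by (rule sum_Pow_card_eq)
  thus "(\<Sum>Z\<in>Pow X. card {S \<in> fillings D N. descents D S = Z})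
      = (\<Sum>Z\<in>Pow X. card {S \<in> fillings (prod.swap ` D) N. descents (prod.swap ` D) S = Z})"
    using card_fillings_within_swap \<open>finite D\<close> by simp
qed

theorem theorem29:
  fixes lam :: "nat list" and n k :: nat and X :: "nat set"
  assumes "is_partition lam n"
    and "X \<subseteq> {1..n + k}"
  shows "card {S \<in> SYT_plus lam k. Des_plus lam S = X}
       = card {S \<in> SYT_plus (conjugate lam) k. Des_plus (conjugate lam) S = X}"
proof -
  have sorted: "sorted (rev lam)" using assms(1) by (simp add: is_partition_def)
  have "finite X" using assms(2) finite_subset by blast
  hence "card {S \<in> fillings (ferrers lam) (sum_list lam + k). descents (ferrers lam) S = X}
       = card {S \<in> fillings (prod.swap ` ferrers lam) (sum_list lam + k).
                 descents (prod.swap ` ferrers lam) S = X}"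
    by (rule card_descents_eq_swap[OF finite_ferrers])
  thus ?thesis
    unfolding SYT_plus_eq_fillings Des_plus_eq_descents
      ferrers_conjugate[OF sorted] sum_list_conjugate[OF sorted] .
qed

end
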